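(* Let $d<n$ be positive integers and let $r\in\{0,1\}$ with $d\equiv r \pmod 2$. For every family $\mathcal{A}\subset 2^{[n]}$ with $\mathrm{VC}(\mathcal{A}\triangle\mathcal{A})\le d$, we have $|\mathcal{A}|\le 2^r\binom{n-r}{\le \lfloor d/2\rfloor}$.
   Context: $[n]=\{1,\dots,n\}$. For $Y\subset[n]$, $Y$ is shattered by $\mathcal{F}\subset 2^{[n]}$ if $\{S\cap Y: S\in\mathcal{F}\}=2^Y$; $\mathrm{VC}(\mathcal{F})$ is the largest cardinality of a set shattered by $\mathcal{F}$. $\mathcal{A}\triangle\mathcal{A}=\{S\triangle T: S,T\in\mathcal{A}\}$, where $\triangle$ is symmetric difference. $\binom{m}{\le t}=\sum_{j=0}^{t}\binom{m}{j}$. *)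

theory Defs
  imports Main
begin

definition shatters :: "nat set set \<Rightarrow> nat set \<Rightarrow> bool" where
  "shatters F Y \<longleftrightarrow> (\<lambda>S. S \<inter> Y) ` F = Pow Y"

definition VC :: "nat \<Rightarrow> nat set set \<Rightarrow> nat" where
  "VC n F = Max ({card Y | Y. Y \<subseteq> {1..n} \<and> shatters F Y} \<union> {0})"

definition symdiff_family :: "nat set set \<Rightarrow> nat set set" where
  "symdiff_family A = {(S - T) \<union> (T - S) | S T. S \<in> A \<and> T \<in> A}"

definition binom_le :: "nat \<Rightarrow> nat \<Rightarrow> nat" where
  "binom_le m t = (\<Sum>j\<le>t. m choose j)"

end

theory Submission
  imports Defs
begin

text \<open>Down-compressing \<open>\<A>\<close> coordinate by coordinate gives a down-set \<open>D\<close> of the same size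
  in which the union of any two disjoint members is shattered by \<open>\<A>\<triangle>\<A>\<close>. Since
  \<open>U \<union> V = U \<union> (V - U)\<close> and \<open>D\<close> is a down-set, all pairwise unions in \<open>D\<close> have at most \<open>d\<close>
  elements. For such families Kleitman's bound follows after shifting (which keeps the size and
  the union bound) by induction on \<open>n\<close>: the members avoiding \<open>n\<close> form a family of the same kind
  on \<open>[n - 1]\<close>, and shiftedness forces the links of the members containing \<open>n\<close> to have pairwise
  unions of at most \<open>d - 2\<close> elements, matching the Pascal recursion of the bound.\<close>

definition symdiffs :: "nat set set \<Rightarrow> nat set set \<Rightarrow> nat set set" where
  "symdiffs F G = {(S - T) \<union> (T - S) | S T. S \<in> F \<and> T \<in> G}"

lemma symdiffs_commute: "symdiffs F G = symdiffs G F"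
  unfolding symdiffs_def by blast

lemma shatters_if_traces:
  assumes "shatters X Y" "\<And>x. x \<in> X \<Longrightarrow> \<exists>x'\<in>X'. x \<inter> Y = x' \<inter> Y"
  shows "shatters X' Y"
  unfolding shatters_def
proof (intro equalityI subsetI)
  fix W assume "W \<in> Pow Y"
  then obtain x where "x \<in> X" "W = x \<inter> Y" using assms(1) unfolding shatters_def by blast
  then show "W \<in> (\<lambda>S. S \<inter> Y) ` X'" using assms(2) by blast
qed auto

lemma card_le_VC:
  assumes "Y \<subseteq> {1..n}" "shatters F Y"
  shows "card Y \<le> VC n F"
proof -
  have "{card Y |Y. Y \<subseteq> {1..n} \<and> shatters F Y} \<subseteq> card ` Pow {1..n}" by auto
  then have "finite ({card Y |Y. Y \<subseteq> {1..n} \<and> shatters F Y} \<union> {0})"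
    by (simp add: finite_subset)
  then show ?thesis unfolding VC_def using assms by (intro Max_ge) auto
qed

definition union_bounded :: "nat \<Rightarrow> nat set set \<Rightarrow> bool" where
  "union_bounded d F \<longleftrightarrow> (\<forall>S\<in>F. \<forall>T\<in>F. card (S \<union> T) \<le> d)"

subsection \<open>Down-compression\<close>

definition down_closed :: "nat set set \<Rightarrow> bool" where
  "down_closed F \<longleftrightarrow> (\<forall>X\<in>F. \<forall>Y. Y \<subseteq> X \<longrightarrow> Y \<in> F)"

definition deletion :: "nat \<Rightarrow> nat set set \<Rightarrow> nat set set" where
  "deletion k F = {S\<in>F. k \<notin> S}"

definition link :: "nat \<Rightarrow> nat set set \<Rightarrow> nat set set" where
  "link k F = (\<lambda>S. S - {k}) ` {S\<in>F. k \<in> S}"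

text \<open>\<open>compress k F\<close> is the result of down-compressing \<open>F \<subseteq> 2\<^bsup>[k]\<^esup>\<close> in the coordinates
  \<open>k, k - 1, \<dots>, 1\<close>: compressing in \<open>k\<close> first gives \<open>(L \<union> H) \<union> insert k ` (L \<inter> H)\<close> with
  \<open>L, H\<close> the deletion and the link of \<open>k\<close>, and the remaining compressions act on both parts
  separately.\<close>
fun compress :: "nat \<Rightarrow> nat set set \<Rightarrow> nat set set" where
  "compress 0 F = F"
| "compress (Suc k) F =
     compress k (deletion (Suc k) F \<union> link (Suc k) F)
     \<union> insert (Suc k) ` compress k (deletion (Suc k) F \<inter> link (Suc k) F)"

lemma deletion_link_subset:
  assumes "F \<subseteq> Pow {1..Suc k}"
  shows "deletion (Suc k) F \<union> link (Suc k) F \<subseteq> Pow {1..k}"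
    and "deletion (Suc k) F \<inter> link (Suc k) F \<subseteq> Pow {1..k}"
  using assms unfolding deletion_def link_def by (auto simp: subset_iff le_Suc_eq)

lemma link_memD: "S' \<in> link k F \<Longrightarrow> insert k S' \<in> F \<and> k \<notin> S'"
  unfolding link_def by (auto simp: insert_absorb)

lemma link_memI: "insert k S \<in> F \<Longrightarrow> k \<notin> S \<Longrightarrow> S \<in> link k F"
  unfolding link_def by (rule rev_image_eqI[of "insert k S"]) auto

lemma deletion_link_cases:
  "S' \<in> deletion k F \<union> link k F \<Longrightarrow> \<exists>S\<in>F. S' = S - {k}"
  unfolding deletion_def link_def by auto

lemma card_deletion_link:
  assumes "finite F"
  shows "card F = card (deletion k F) + card (link k F)"
proof -
  have "card (link k F) = card {S\<in>F. k \<in> S}"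
    unfolding link_def by (rule card_image) (auto simp: inj_on_def)
  moreover have "F = deletion k F \<union> {S\<in>F. k \<in> S}" "deletion k F \<inter> {S\<in>F. k \<in> S} = {}"
    unfolding deletion_def by auto
  ultimately show ?thesis using assms by (metis card_Un_disjoint finite_Un)
qed

lemma Suc_notin_Pow: "A \<subseteq> Pow {1..k} \<Longrightarrow> X \<in> A \<Longrightarrow> Suc k \<notin> X"
  by fastforce

lemma compress_subset: "F \<subseteq> Pow {1..k} \<Longrightarrow> compress k F \<subseteq> Pow {1..k}"
proof (induction k arbitrary: F)
  case (Suc k)
  have "compress k (deletion (Suc k) F \<union> link (Suc k) F) \<subseteq> Pow {1..k}"
    "compress k (deletion (Suc k) F \<inter> link (Suc k) F) \<subseteq> Pow {1..k}"
    using Suc.IH deletion_link_subset[OF Suc.prems] by blast+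
  then show ?case by (force simp: subset_iff)
qed simp

lemma compress_mono: "F \<subseteq> G \<Longrightarrow> compress k F \<subseteq> compress k G"
proof (induction k arbitrary: F G)
  case (Suc k)
  have "deletion (Suc k) F \<subseteq> deletion (Suc k) G" "link (Suc k) F \<subseteq> link (Suc k) G"
    using Suc.prems unfolding deletion_def link_def by auto
  then have "compress k (deletion (Suc k) F \<union> link (Suc k) F)
             \<subseteq> compress k (deletion (Suc k) G \<union> link (Suc k) G)"
    "compress k (deletion (Suc k) F \<inter> link (Suc k) F)
             \<subseteq> compress k (deletion (Suc k) G \<inter> link (Suc k) G)"
    by (auto intro!: Suc.IH)
  then show ?case by auto
qed simp

lemma card_compress: "F \<subseteq> Pow {1..k} \<Longrightarrow> card (compress k F) = card F"
proof (induction k arbitrary: F)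
  case (Suc k)
  let ?L = "deletion (Suc k) F" and ?H = "link (Suc k) F"
  have fin: "finite F" using Suc.prems by (rule finite_subset) simp
  note s = deletion_link_subset[OF Suc.prems]
  have c: "compress k (?L \<union> ?H) \<subseteq> Pow {1..k}" "compress k (?L \<inter> ?H) \<subseteq> Pow {1..k}"
    using compress_subset s by auto
  then have fc: "finite (compress k (?L \<union> ?H))" "finite (compress k (?L \<inter> ?H))"
    by (auto intro: finite_subset)
  have disj: "compress k (?L \<union> ?H) \<inter> insert (Suc k) ` compress k (?L \<inter> ?H) = {}"
    using c by auto
  have inj: "inj_on (insert (Suc k)) (compress k (?L \<inter> ?H))"
    using c by (intro inj_onI) (metis Diff_insert_absorb Suc_notin_Pow)
  have "card (compress (Suc k) F)
      = card (compress k (?L \<union> ?H)) + card (insert (Suc k) ` compress k (?L \<inter> ?H))"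
    using disj fc by (simp add: card_Un_disjoint)
  also have "\<dots> = card (?L \<union> ?H) + card (?L \<inter> ?H)"
    using Suc.IH s card_image[OF inj] by simp
  also have "\<dots> = card ?L + card ?H"
    using fin by (intro card_Un_Int[symmetric]) (auto simp: deletion_def link_def)
  also have "\<dots> = card F"
    using card_deletion_link[OF fin] by simp
  finally show ?case .
qed simp

lemma down_closed_compress: "F \<subseteq> Pow {1..k} \<Longrightarrow> down_closed (compress k F)"
proof (induction k arbitrary: F)
  case 0 then show ?case unfolding down_closed_def by auto
next
  case (Suc k)
  let ?U = "compress k (deletion (Suc k) F \<union> link (Suc k) F)"
    and ?I = "compress k (deletion (Suc k) F \<inter> link (Suc k) F)"
  have down: "down_closed ?U" "down_closed ?I"
    using Suc.IH[OF deletion_link_subset(1)[OF Suc.prems]]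
      Suc.IH[OF deletion_link_subset(2)[OF Suc.prems]] .
  have "?I \<subseteq> ?U" by (rule compress_mono) blast
  show ?case unfolding down_closed_def compress.simps(2)
  proof (intro ballI allI impI)
    fix X Y assume X: "X \<in> ?U \<union> insert (Suc k) ` ?I" and Y: "Y \<subseteq> X"
    show "Y \<in> ?U \<union> insert (Suc k) ` ?I"
    proof (cases "X \<in> ?U")
      case True then show ?thesis using down(1) Y unfolding down_closed_def by blast
    next
      case False
      then obtain X' where "X' \<in> ?I" "X = insert (Suc k) X'" using X by blast
      then have "Y - {Suc k} \<in> ?I" using down(2) Y unfolding down_closed_def by blast
      show ?thesis
      proof (cases "Suc k \<in> Y")
        case True
        then have "Y = insert (Suc k) (Y - {Suc k})" by blast
        then show ?thesis using \<open>Y - {Suc k} \<in> ?I\<close> by (metis UnI2 imageI)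
      next
        case False
        then show ?thesis using \<open>Y - {Suc k} \<in> ?I\<close> \<open>?I \<subseteq> ?U\<close> by auto
      qed
    qed
  qed
qed

lemma shatters_symdiffs_of_unions:
  assumes "shatters (symdiffs (deletion k F \<union> link k F) (deletion k G \<union> link k G)) Y"
    and "k \<notin> Y"
  shows "shatters (symdiffs F G) Y"
proof (rule shatters_if_traces[OF assms(1)])
  fix x assume "x \<in> symdiffs (deletion k F \<union> link k F) (deletion k G \<union> link k G)"
  then obtain S' T' where "x = (S' - T') \<union> (T' - S')"
    and "S' \<in> deletion k F \<union> link k F" "T' \<in> deletion k G \<union> link k G"
    unfolding symdiffs_def by blast
  then obtain S T where "S \<in> F" "T \<in> G"
    and x: "x = ((S - {k}) - (T - {k})) \<union> ((T - {k}) - (S - {k}))"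
    using deletion_link_cases by metis
  then have "(S - T) \<union> (T - S) \<in> symdiffs F G"
    unfolding symdiffs_def by blast
  moreover have "x \<inter> Y = ((S - T) \<union> (T - S)) \<inter> Y"
    using x assms(2) by auto
  ultimately show "\<exists>x'\<in>symdiffs F G. x \<inter> Y = x' \<inter> Y" by blast
qed

text \<open>The witness \<open>S\<close> for a trace \<open>W\<close> on \<open>insert k Y\<close> is chosen among the two sets
  \<open>S', insert k S' \<in> F\<close> so that \<open>k \<in> S \<triangle> T \<longleftrightarrow> k \<in> W\<close>.\<close>
lemma shatters_symdiffs_insert:
  assumes "shatters (symdiffs (deletion k F \<inter> link k F) (deletion k G \<union> link k G)) Y"
    and "k \<notin> Y"
  shows "shatters (symdiffs F G) (insert k Y)"
  unfolding shatters_def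
proof (intro equalityI subsetI)
  fix W assume W: "W \<in> Pow (insert k Y)"
  then have "W - {k} \<in> Pow Y" by auto
  then obtain z where z: "z \<in> symdiffs (deletion k F \<inter> link k F) (deletion k G \<union> link k G)"
    and "W - {k} = z \<inter> Y"
    using assms(1) unfolding shatters_def by blast
  then obtain S' T' where S': "S' \<in> deletion k F \<inter> link k F"
    and "T' \<in> deletion k G \<union> link k G" and "W - {k} = ((S' - T') \<union> (T' - S')) \<inter> Y"
    unfolding symdiffs_def by blast
  then obtain T where T: "T \<in> G"
    and trace: "W - {k} = ((S' - (T - {k})) \<union> ((T - {k}) - S')) \<inter> Y"
    using deletion_link_cases by metis
  have S'F: "S' \<in> F" "insert k S' \<in> F" "k \<notin> S'"
    using S' link_memD unfolding deletion_def by auto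
  define S where "S = (if (k \<in> W) = (k \<in> T) then S' else insert k S')"
  have "S \<in> F" using S'F unfolding S_def by auto
  moreover have "W = ((S - T) \<union> (T - S)) \<inter> insert k Y"
  proof -
    have "S - {k} = S'" using S'F(3) unfolding S_def by auto
    then have "W \<inter> Y = ((S - T) \<union> (T - S)) \<inter> Y"
      using trace assms(2) by blast
    moreover have "k \<in> W \<longleftrightarrow> k \<in> (S - T) \<union> (T - S)"
      using S'F(3) unfolding S_def by auto
    ultimately show ?thesis using W by blast
  qed
  ultimately show "W \<in> (\<lambda>S. S \<inter> insert k Y) ` symdiffs F G"
    unfolding symdiffs_def using T by blast
qed auto

lemma shatters_symdiffs_compress:
  "F \<subseteq> Pow {1..k} \<Longrightarrow> G \<subseteq> Pow {1..k} \<Longrightarrow> U \<in> compress k F \<Longrightarrow> V \<in> compress k G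
   \<Longrightarrow> U \<inter> V = {} \<Longrightarrow> shatters (symdiffs F G) (U \<union> V)"
proof (induction k arbitrary: F G U V)
  case 0
  then have "U = {}" "V = {}" "{} \<in> symdiffs F G" unfolding symdiffs_def by auto
  then show ?case unfolding shatters_def by auto
next
  case (Suc k)
  let ?UF = "deletion (Suc k) F \<union> link (Suc k) F" and ?IF = "deletion (Suc k) F \<inter> link (Suc k) F"
  let ?UG = "deletion (Suc k) G \<union> link (Suc k) G" and ?IG = "deletion (Suc k) G \<inter> link (Suc k) G"
  note F = deletion_link_subset[OF Suc.prems(1)] and G = deletion_link_subset[OF Suc.prems(2)]
  have notin: "Suc k \<notin> X" if "X \<in> compress k H" "H \<subseteq> Pow {1..k}" for X H
    using that by (meson Suc_notin_Pow compress_subset)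
  consider (UU) "U \<in> compress k ?UF" "V \<in> compress k ?UG"
    | (UI) V' where "U \<in> compress k ?UF" "V' \<in> compress k ?IG" "V = insert (Suc k) V'"
    | (IU) U' where "U' \<in> compress k ?IF" "U = insert (Suc k) U'" "V \<in> compress k ?UG"
    using Suc.prems(3-5) unfolding compress.simps by blast
  then show ?case
  proof cases
    case UU
    have "shatters (symdiffs ?UF ?UG) (U \<union> V)"
      using Suc.IH[OF F(1) G(1) UU Suc.prems(5)] .
    moreover have "Suc k \<notin> U \<union> V" using notin[OF UU(1) F(1)] notin[OF UU(2) G(1)] by blast
    ultimately show ?thesis by (rule shatters_symdiffs_of_unions)
  next
    case UI
    have "U \<inter> V' = {}" using Suc.prems(5) UI(3) by auto
    then have "shatters (symdiffs ?UF ?IG) (U \<union> V')" using Suc.IH[OF F(1) G(2) UI(1,2)] by blast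
    then have "shatters (symdiffs ?IG ?UF) (V' \<union> U)" by (metis symdiffs_commute Un_commute)
    moreover have "Suc k \<notin> V' \<union> U" using notin[OF UI(1) F(1)] notin[OF UI(2) G(2)] by blast
    ultimately have "shatters (symdiffs G F) (insert (Suc k) (V' \<union> U))"
      by (rule shatters_symdiffs_insert)
    moreover have "insert (Suc k) (V' \<union> U) = U \<union> V" using UI(3) by auto
    ultimately show ?thesis by (metis symdiffs_commute)
  next
    case IU
    have "U' \<inter> V = {}" using Suc.prems(5) IU(2) by auto
    then have "shatters (symdiffs ?IF ?UG) (U' \<union> V)" using Suc.IH[OF F(2) G(1) IU(1,3)] by blast
    moreover have "Suc k \<notin> U' \<union> V" using notin[OF IU(1) F(2)] notin[OF IU(3) G(1)] by blast
    ultimately have "shatters (symdiffs F G) (insert (Suc k) (U' \<union> V))"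
      by (rule shatters_symdiffs_insert)
    moreover have "insert (Suc k) (U' \<union> V) = U \<union> V" using IU(2) by auto
    ultimately show ?thesis by simp
  qed
qed

lemma union_bounded_compress:
  assumes "A \<subseteq> Pow {1..n}" and "VC n (symdiff_family A) \<le> d"
  shows "union_bounded d (compress n A)"
  unfolding union_bounded_def
proof (intro ballI)
  fix U V assume U: "U \<in> compress n A" and V: "V \<in> compress n A"
  have "V - U \<in> compress n A"
    using down_closed_compress[OF assms(1)] V unfolding down_closed_def by blast
  then have "shatters (symdiffs A A) (U \<union> (V - U))"
    using shatters_symdiffs_compress[OF assms(1) assms(1) U] by blast
  moreover have "symdiffs A A = symdiff_family A" "U \<union> (V - U) = U \<union> V"
    unfolding symdiffs_def symdiff_family_def by auto
  moreover have "U \<union> V \<subseteq> {1..n}" using U V compress_subset[OF assms(1)] by blast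
  ultimately show "card (U \<union> V) \<le> d" using card_le_VC assms(2) by (metis order_trans)
qed

subsection \<open>Shifting\<close>

definition shift :: "nat \<Rightarrow> nat \<Rightarrow> nat set \<Rightarrow> nat set" where
  "shift i j S = insert i (S - {j})"

definition shift_in :: "nat \<Rightarrow> nat \<Rightarrow> nat set set \<Rightarrow> nat set \<Rightarrow> nat set" where
  "shift_in i j E S = (if j \<in> S \<and> i \<notin> S \<and> shift i j S \<notin> E then shift i j S else S)"

definition shifted :: "nat set set \<Rightarrow> bool" where
  "shifted E \<longleftrightarrow> (\<forall>S\<in>E. \<forall>i j. 1 \<le> i \<and> i < j \<and> j \<in> S \<and> i \<notin> S \<longrightarrow> shift i j S \<in> E)"

definition weight :: "nat set set \<Rightarrow> nat" where
  "weight E = (\<Sum>S\<in>E. \<Sum>S)"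

lemma shift_inverse: "j \<in> S \<Longrightarrow> i \<notin> S \<Longrightarrow> i \<noteq> j \<Longrightarrow> insert j (shift i j S - {i}) = S"
  unfolding shift_def by auto

lemma inj_on_shift_in: "i \<noteq> j \<Longrightarrow> inj_on (shift_in i j E) E"
  by (rule inj_onI) (simp add: shift_in_def split: if_splits; metis shift_inverse)

lemma card_shift: "finite S \<Longrightarrow> j \<in> S \<Longrightarrow> i \<notin> S \<Longrightarrow> card (shift i j S) = card S"
  using card_Suc_Diff1[of S j] by (simp add: shift_def)

lemma shift_in_image_subset:
  "E \<subseteq> Pow {1..n} \<Longrightarrow> 1 \<le> i \<Longrightarrow> i < j \<Longrightarrow> shift_in i j E ` E \<subseteq> Pow {1..n}"
  unfolding shift_in_def shift_def by (auto simp: subset_iff) (meson less_imp_le_nat order.trans)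

lemma card_shift_Un_le:
  assumes "finite S" "finite T" "j \<in> S" "i \<notin> S" "T \<in> E" "S \<in> E"
    and "\<not> (j \<in> T \<and> i \<notin> T \<and> shift i j T \<notin> E)"
  shows "\<exists>S0\<in>E. \<exists>T0\<in>E. card (shift i j S \<union> T) \<le> card (S0 \<union> T0)"
proof (cases "i \<in> T \<or> j \<notin> T")
  case True
  have "card (shift i j S \<union> T) \<le> card (S \<union> T)"
  proof (cases "i \<in> T")
    case True
    then have "shift i j S \<union> T \<subseteq> S \<union> T" unfolding shift_def by auto
    then show ?thesis using assms(1,2) by (simp add: card_mono)
  next
    case False
    then have "shift i j S \<union> T = shift i j (S \<union> T)"
      using True unfolding shift_def by auto
    then show ?thesis using False assms(1-4) by (simp add: card_shift)
  qed
  then show ?thesis using assms(5,6) by blast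
next
  case False
  then have "shift i j T \<in> E" "shift i j S \<union> T = S \<union> shift i j T"
    using assms(3,4,7) unfolding shift_def by auto
  then show ?thesis using assms(6) by (metis order_refl)
qed

lemma union_bounded_shift_in:
  assumes fin: "\<And>S. S \<in> E \<Longrightarrow> finite S" and "union_bounded d E"
  shows "union_bounded d (shift_in i j E ` E)"
  unfolding union_bounded_def
proof (intro ballI)
  fix X Y assume "X \<in> shift_in i j E ` E" "Y \<in> shift_in i j E ` E"
  then obtain S T where S: "S \<in> E" "X = shift_in i j E S" and T: "T \<in> E" "Y = shift_in i j E T"
    by auto
  let ?mv = "\<lambda>S. j \<in> S \<and> i \<notin> S \<and> shift i j S \<notin> E"
  have "\<exists>S0\<in>E. \<exists>T0\<in>E. card (X \<union> Y) \<le> card (S0 \<union> T0)"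
  proof (cases "?mv S \<and> ?mv T")
    case True
    then have "X \<union> Y = shift i j (S \<union> T)"
      using S T unfolding shift_in_def shift_def by auto
    then have "card (X \<union> Y) = card (S \<union> T)" using True fin S T by (simp add: card_shift)
    then show ?thesis using S T by (metis order_refl)
  next
    case False
    then consider "\<not> ?mv S" "\<not> ?mv T" | "?mv S" "\<not> ?mv T" | "\<not> ?mv S" "?mv T" by blast
    then show ?thesis
    proof cases
      case 1
      then show ?thesis using S T unfolding shift_in_def by (metis order_refl)
    next
      case 2
      then have "X \<union> Y = shift i j S \<union> T" using S T unfolding shift_in_def by auto
      then show ?thesis using card_shift_Un_le[of S T j i E] fin S T 2 by auto
    next
      case 3
      then have "X \<union> Y = shift i j T \<union> S" using S T unfolding shift_in_def by auto
      then show ?thesis using card_shift_Un_le[of T S j i E] fin S T 3 by (auto simp: Un_commute)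
    qed
  qed
  then show "card (X \<union> Y) \<le> d" using assms(2) unfolding union_bounded_def by (meson order_trans)
qed

lemma sum_shift_less: "finite S \<Longrightarrow> j \<in> S \<Longrightarrow> i \<notin> S \<Longrightarrow> i < j \<Longrightarrow> \<Sum>(shift i j S) < \<Sum>S"
  unfolding shift_def by (simp add: sum.remove)

lemma weight_shift_in_less:
  assumes "finite E" "\<And>S. S \<in> E \<Longrightarrow> finite S" "i < j"
    and "S \<in> E" "j \<in> S" "i \<notin> S" "shift i j S \<notin> E"
  shows "weight (shift_in i j E ` E) < weight E"
proof -
  have "weight (shift_in i j E ` E) = (\<Sum>T\<in>E. \<Sum>(shift_in i j E T))"
    unfolding weight_def using inj_on_shift_in[of i j E] assms(3) by (simp add: sum.reindex)
  also have "\<dots> < (\<Sum>T\<in>E. \<Sum>T)"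
  proof (rule sum_strict_mono_ex1[OF assms(1)])
    show "\<forall>T\<in>E. \<Sum>(shift_in i j E T) \<le> \<Sum>T"
      using sum_shift_less assms(2,3) unfolding shift_in_def by (auto simp: less_imp_le)
    show "\<exists>T\<in>E. \<Sum>(shift_in i j E T) < \<Sum>T"
      using assms sum_shift_less unfolding shift_in_def by auto
  qed
  finally show ?thesis unfolding weight_def .
qed

text \<open>A family of minimal weight among those with the same size and union bound is shifted,
  since a non-trivial shift would decrease the weight.\<close>
lemma ex_shifted_union_bounded:
  assumes "E \<subseteq> Pow {1..n}" "union_bounded d E"
  shows "\<exists>E'. E' \<subseteq> Pow {1..n} \<and> card E' = card E \<and> union_bounded d E' \<and> shifted E'"
proof -
  define P where "P E' \<longleftrightarrow> E' \<subseteq> Pow {1..n} \<and> card E' = card E \<and> union_bounded d E'" for E'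
  obtain M where PM: "P M" and min: "\<And>E'. P E' \<Longrightarrow> weight M \<le> weight E'"
    using ex_has_least_nat[of P E weight] assms unfolding P_def by blast
  have sub: "M \<subseteq> Pow {1..n}" and finM: "finite M" and finS: "\<And>S. S \<in> M \<Longrightarrow> finite S"
    using PM unfolding P_def by (auto intro: finite_subset)
  have "shifted M" unfolding shifted_def
  proof (intro ballI allI impI)
    fix S i j assume S: "S \<in> M" and ij: "1 \<le> i \<and> i < j \<and> j \<in> S \<and> i \<notin> S"
    show "shift i j S \<in> M"
    proof (rule ccontr)
      assume "shift i j S \<notin> M"
      then have "weight (shift_in i j M ` M) < weight M"
        using weight_shift_in_less[OF finM finS _ S] ij by blast
      moreover have "P (shift_in i j M ` M)"
        using PM shift_in_image_subset[OF sub] union_bounded_shift_in[OF finS] ij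
          card_image[OF inj_on_shift_in[of i j M]] unfolding P_def by auto
      ultimately show False using min by (meson not_le)
    qed
  qed
  then show ?thesis using PM unfolding P_def by blast
qed

subsection \<open>Kleitman's bound\<close>

definition kleitman_bound :: "nat \<Rightarrow> nat \<Rightarrow> nat" where
  "kleitman_bound n d = 2 ^ (d mod 2) * binom_le (n - d mod 2) (d div 2)"

lemma binom_le_Suc_Suc: "binom_le (Suc m) (Suc t) = binom_le m (Suc t) + binom_le m t"
proof -
  have "binom_le (Suc m) (Suc t) = (Suc m choose 0) + (\<Sum>j\<le>t. Suc m choose Suc j)"
    unfolding binom_le_def by (rule sum.atMost_Suc_shift)
  also have "(\<Sum>j\<le>t. Suc m choose Suc j) = (\<Sum>j\<le>t. m choose Suc j) + (\<Sum>j\<le>t. m choose j)"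
    by (simp only: binomial_Suc_Suc sum.distrib add.commute)
  also have "binom_le m (Suc t) = (m choose 0) + (\<Sum>j\<le>t. m choose Suc j)"
    unfolding binom_le_def by (rule sum.atMost_Suc_shift)
  ultimately show ?thesis unfolding binom_le_def by simp
qed

text \<open>By the symmetry of the binomial coefficients, the lower half of the row \<open>2 s + 1\<close>
  carries half of its sum \<open>2\<^bsup>2 s + 1\<^esup>\<close>.\<close>
lemma binom_le_lower_half: "binom_le (2 * s + 1) s = 2 ^ (2 * s)"
proof -
  define N where "N = 2 * s + 1"
  define f where "f j = N choose j" for j
  have "sum f {s+1..N} = (\<Sum>j\<le>s. f (N - j))"
    by (rule sum.reindex_bij_witness[of _ "\<lambda>j. N - j" "\<lambda>j. N - j"]) (auto simp: N_def)
  also have "\<dots> = sum f {..s}"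
    by (rule sum.cong) (auto simp: f_def N_def binomial_symmetric[symmetric])
  finally have "sum f {s+1..N} = sum f {..s}" .
  moreover have "{..N} = {..s} \<union> {s+1..N}" by (auto simp: N_def)
  then have "sum f {..N} = sum f {..s} + sum f {s+1..N}"
    by (simp add: sum.union_disjoint)
  moreover have "sum f {..N} = 2 * 2 ^ (2 * s)"
    unfolding f_def using choose_row_sum[of N] by (simp add: N_def)
  ultimately show ?thesis unfolding binom_le_def f_def N_def by simp
qed

lemma kleitman_bound_top: "kleitman_bound (Suc m) m = 2 ^ m"
proof (cases "even m")
  case True
  then obtain s where "m = 2 * s" by auto
  then show ?thesis unfolding kleitman_bound_def using binom_le_lower_half[of s] by simp
next
  case False
  then obtain s where "m = 2 * s + 1" using oddE by blast
  then show ?thesis unfolding kleitman_bound_def using binom_le_lower_half[of s] by simp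
qed

lemma kleitman_bound_Suc:
  assumes "2 \<le> d" "d < m"
  shows "kleitman_bound (Suc m) d = kleitman_bound m d + kleitman_bound m (d - 2)"
proof (cases "even d")
  case True
  then obtain k where "d = 2 * k" by blast
  then have "d = 2 * (k - 1) + 2" using assms(1) by simp
  then show ?thesis unfolding kleitman_bound_def using binom_le_Suc_Suc[of m "k - 1"] by simp
next
  case False
  then obtain k where "d = 2 * k + 1" using oddE by blast
  then have "d = 2 * (k - 1) + 3" using assms(1) by simp
  moreover obtain m' where "m = Suc m'" using assms(2) by (cases m) auto
  ultimately show ?thesis
    unfolding kleitman_bound_def using binom_le_Suc_Suc[of m' "k - 1"] by simp
qed

lemma kleitman_bound_Suc_small: "d < 2 \<Longrightarrow> kleitman_bound (Suc m) d = kleitman_bound m d"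
  unfolding kleitman_bound_def binom_le_def by (cases d) auto

text \<open>A set and its complement in \<open>[m + 1]\<close> cannot both be present, so at most half of the
  \<open>2\<^bsup>m + 1\<^esup>\<close> subsets are.\<close>
lemma card_le_of_union_bounded_top:
  assumes sub: "D \<subseteq> Pow {1..Suc m}" and "union_bounded m D"
  shows "card D \<le> 2 ^ m"
proof -
  define c where "c S = {1..Suc m} - S" for S
  have fin: "finite D" using sub by (rule finite_subset) simp
  have "inj_on c D" unfolding inj_on_def c_def using sub by blast
  have "D \<inter> c ` D = {}"
  proof (rule ccontr)
    assume "D \<inter> c ` D \<noteq> {}"
    then obtain S where S: "S \<in> D" "c S \<in> D" by auto
    then have "S \<union> c S = {1..Suc m}" using sub unfolding c_def by auto
    moreover have "card (S \<union> c S) \<le> m" using assms(2) S unfolding union_bounded_def by blast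
    ultimately show False by simp
  qed
  moreover have "D \<union> c ` D \<subseteq> Pow {1..Suc m}" using sub unfolding c_def by auto
  then have "card (D \<union> c ` D) \<le> 2 ^ Suc m"
    using card_mono[of "Pow {1..Suc m}"] by (simp add: card_Pow)
  ultimately have "card D + card (c ` D) \<le> 2 ^ Suc m" using fin by (simp add: card_Un_disjoint)
  then show ?thesis using card_image[OF \<open>inj_on c D\<close>] by simp
qed

lemma shifted_deletion:
  assumes "D \<subseteq> Pow {1..Suc m}" "shifted D"
  shows "shifted (deletion (Suc m) D)"
  unfolding shifted_def
proof (intro ballI allI impI)
  fix S i j assume S: "S \<in> deletion (Suc m) D" and ij: "1 \<le> i \<and> i < j \<and> j \<in> S \<and> i \<notin> S"
  then have "S \<in> D" "Suc m \<notin> S" unfolding deletion_def by auto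
  then have "shift i j S \<in> D" using assms(2) ij unfolding shifted_def by blast
  have "S \<subseteq> {1..Suc m}" using assms(1) \<open>S \<in> D\<close> by blast
  then have "j \<le> Suc m" using ij by auto
  then show "shift i j S \<in> deletion (Suc m) D"
    using \<open>shift i j S \<in> D\<close> \<open>Suc m \<notin> S\<close> ij unfolding deletion_def shift_def by auto
qed

lemma shifted_link:
  assumes "D \<subseteq> Pow {1..Suc m}" "shifted D"
  shows "shifted (link (Suc m) D)"
  unfolding shifted_def
proof (intro ballI allI impI)
  fix X i j assume X: "X \<in> link (Suc m) D" and ij: "1 \<le> i \<and> i < j \<and> j \<in> X \<and> i \<notin> X"
  have "insert (Suc m) X \<in> D" "Suc m \<notin> X" using link_memD[OF X] by auto
  then have "j \<le> m" using assms(1) ij by (metis Pow_iff atLeastAtMost_iff insert_subset le_SucE subsetD)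
  then have "shift i j (insert (Suc m) X) = insert (Suc m) (shift i j X)" "Suc m \<notin> shift i j X"
    using ij \<open>Suc m \<notin> X\<close> unfolding shift_def by auto
  moreover have "shift i j (insert (Suc m) X) \<in> D"
    using assms(2) \<open>insert (Suc m) X \<in> D\<close> ij \<open>j \<le> m\<close> unfolding shifted_def by auto
  ultimately show "shift i j X \<in> link (Suc m) D" by (metis link_memI)
qed

text \<open>If \<open>X \<union> Y\<close> missed the bound by one, some \<open>i \<le> m\<close> would be outside it, and shifting
  \<open>Suc m\<close> to \<open>i\<close> in \<open>insert (Suc m) Y\<close> would give two members of \<open>D\<close> with a union of size
  \<open>d + 1\<close>.\<close>
lemma card_Un_link_le:
  assumes sub: "D \<subseteq> Pow {1..Suc m}" and "shifted D" "union_bounded d D" "d \<le> m"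
    and X: "X \<in> link (Suc m) D" and Y: "Y \<in> link (Suc m) D"
  shows "card (X \<union> Y) + 2 \<le> d"
proof (rule ccontr)
  assume "\<not> card (X \<union> Y) + 2 \<le> d"
  have XD: "insert (Suc m) X \<in> D" and YD: "insert (Suc m) Y \<in> D"
    using link_memD X Y by auto
  have XY: "X \<union> Y \<subseteq> {1..m}"
    using deletion_link_subset(1)[OF sub] X Y by blast
  then have fXY: "finite (X \<union> Y)" and "Suc m \<notin> X \<union> Y" by (auto intro: finite_subset)
  then have "card (insert (Suc m) X \<union> insert (Suc m) Y) = Suc (card (X \<union> Y))" by simp
  then have eq: "Suc (card (X \<union> Y)) = d"
    using assms(3) XD YD \<open>\<not> card (X \<union> Y) + 2 \<le> d\<close> unfolding union_bounded_def by fastforce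
  then have "card (X \<union> Y) < card {1..m}" using assms(4) by simp
  then obtain i where i: "i \<in> {1..m}" "i \<notin> X \<union> Y"
    using card_mono[OF fXY] by (meson subsetI not_le)
  have "shift i (Suc m) (insert (Suc m) Y) \<in> D"
    using assms(2) YD i unfolding shifted_def by auto
  moreover have "shift i (Suc m) (insert (Suc m) Y) = insert i Y"
    using \<open>Suc m \<notin> X \<union> Y\<close> i unfolding shift_def by auto
  ultimately have "insert i Y \<in> D" by simp
  then have "card (insert (Suc m) X \<union> insert i Y) \<le> d"
    using assms(3) XD unfolding union_bounded_def by blast
  moreover have "insert (Suc m) X \<union> insert i Y = insert (Suc m) (insert i (X \<union> Y))" by auto
  ultimately show False using fXY i \<open>Suc m \<notin> X \<union> Y\<close> eq by auto
qed

theorem card_le_kleitman_bound: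
  "d < n \<Longrightarrow> D \<subseteq> Pow {1..n} \<Longrightarrow> shifted D \<Longrightarrow> union_bounded d D \<Longrightarrow> card D \<le> kleitman_bound n d"
proof (induction n arbitrary: d D)
  case (Suc m)
  show ?case
  proof (cases "d = m")
    case True
    then show ?thesis
      using card_le_of_union_bounded_top[of D m] Suc.prems(2,4) kleitman_bound_top by simp
  next
    case False
    then have "d < m" using Suc.prems(1) by simp
    have sub: "deletion (Suc m) D \<subseteq> Pow {1..m}" "link (Suc m) D \<subseteq> Pow {1..m}"
      using deletion_link_subset(1)[OF Suc.prems(2)] by auto
    have "union_bounded d (deletion (Suc m) D)"
      using Suc.prems(4) unfolding union_bounded_def deletion_def by auto
    then have L: "card (deletion (Suc m) D) \<le> kleitman_bound m d"
      using Suc.IH[OF \<open>d < m\<close> sub(1) shifted_deletion[OF Suc.prems(2,3)]] by blast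
    have H: "card (X \<union> Y) + 2 \<le> d" if "X \<in> link (Suc m) D" "Y \<in> link (Suc m) D" for X Y
      using card_Un_link_le[OF Suc.prems(2-4) less_imp_le[OF \<open>d < m\<close>] that] .
    have fin: "finite D" using Suc.prems(2) by (rule finite_subset) simp
    show ?thesis
    proof (cases "2 \<le> d")
      case True
      then have "union_bounded (d - 2) (link (Suc m) D)"
        using H unfolding union_bounded_def by (simp add: le_diff_conv2)
      moreover have "d - 2 < m" using \<open>d < m\<close> by simp
      ultimately have "card (link (Suc m) D) \<le> kleitman_bound m (d - 2)"
        using Suc.IH[OF _ sub(2) shifted_link[OF Suc.prems(2,3)]] by blast
      then show ?thesis
        using card_deletion_link[OF fin, of "Suc m"] L kleitman_bound_Suc[OF True \<open>d < m\<close>] by simp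
    next
      case False
      have "link (Suc m) D = {}"
      proof (rule equals0I)
        fix X assume "X \<in> link (Suc m) D"
        from H[OF this this] False show False by simp
      qed
      then show ?thesis
        using card_deletion_link[OF fin, of "Suc m"] L kleitman_bound_Suc_small False by simp
    qed
  qed
qed simp

theorem theorem2:
  fixes n d r :: nat and A :: "nat set set"
  assumes "0 < d" and "d < n"
    and "r \<in> {0, 1}" and "d mod 2 = r"
    and "A \<subseteq> Pow {1..n}"
    and "VC n (symdiff_family A) \<le> d"
  shows "card A \<le> 2 ^ r * binom_le (n - r) (d div 2)"
proof -
  obtain E where E: "E \<subseteq> Pow {1..n}" "card E = card (compress n A)" "union_bounded d E" "shifted E"
    using ex_shifted_union_bounded[OF compress_subset[OF assms(5)] union_bounded_compress[OF assms(5,6)]]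
    by blast
  have "card (compress n A) \<le> kleitman_bound n d"
    using card_le_kleitman_bound[OF assms(2) E(1,4,3)] E(2) by simp
  then show ?thesis
    using card_compress[OF assms(5)] assms(4) unfolding kleitman_bound_def by simp
qed

end
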